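(* Let $F$ be a formally real field, $L=F(I)$ with $I^2=-1$, let $\mathfrak k$ be the maximal compact subalgebra of a Kac--Moody algebra over $F$ with simply laced diagram $D$ on vertices $v_1,\dots,v_n$, labelled so that $\{v_1,\dots,v_r\}$ is an inclusion-maximal independent set. Let $\rho:\mathfrak k\to\operatorname{End}_L(V)$, $V=L^{m}$ with $m=2^{n-r}$, be the generalized spin representation obtained by starting with $X_i\mapsto\tfrac12 I\in\operatorname{End}(L^1)$ for $i\le r$ and successively, for $t=r,r+1,\dots,n-1$, extending a generalized spin representation $\rho_t$ of $\mathfrak k_{\le t}$ on $L^{s}$ to $\mathfrak k_{\le t+1}$ on $L^{s}\oplus L^{s}$ by $\rho_{t+1}|_{\mathfrak k_{\le t}}=\rho_t\oplus(\rho_t\circ s_0)$ and $\rho_{t+1}(X_{t+1})=\begin{pmatrix}0&\tfrac12I\,\mathrm{id}_s\\ \tfrac12I\,\mathrm{id}_s&0\end{pmatrix}$, where $s_0(X_i)=-X_i$ if $v_i$ is adjacent to $v_{t+1}$ and $s_0(X_i)=X_i$ otherwise. Then the $F$-Lie algebra $\operatorname{im}(\rho)\subseteq\operatorname{End}_L(V)$ is reductive. If moreover $D$ has no isolated vertices, then $\operatorname{im}(\rho)$ is semisimple.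
   Context: A field is formally real if $-1$ is not a sum of squares. A set of vertices is independent if it spans no edge. $\mathfrak k_{\le t}$ denotes the Lie algebra with generators $X_1,\dots,X_t$ and relations $[X_i,[X_i,X_j]]=-X_j$ for adjacent $v_i,v_j$, $[X_i,X_j]=0$ for non-adjacent $i\ne j$ ($i,j\le t$); for $t=n$ this is $\mathfrak k$ by Berman's theorem ($X_i=e_i-f_i$). A generalized spin representation is a Lie algebra homomorphism $\rho$ into $\operatorname{End}(L^s)$ with $\rho(X_i)^2=-\tfrac14\mathrm{id}_s$ for all generators. *)

theory Defs
  imports "Jordan_Normal_Form.Matrix"
begin

definition subfield_of :: "'a::field set \<Rightarrow> bool" where
  "subfield_of F \<longleftrightarrow> 0 \<in> F \<and> 1 \<in> F \<and>
     (\<forall>x\<in>F. \<forall>y\<in>F. x + y \<in> F \<and> x * y \<in> F) \<and>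
     (\<forall>x\<in>F. - x \<in> F \<and> inverse x \<in> F)"

definition formally_real :: "'a::field set \<Rightarrow> bool" where
  "formally_real F \<longleftrightarrow> (\<forall>xs. set xs \<subseteq> F \<longrightarrow> (\<Sum>x\<leftarrow>xs. x ^ 2) \<noteq> - 1)"

definition mbr :: "'a::comm_ring_1 mat \<Rightarrow> 'a mat \<Rightarrow> 'a mat" where
  "mbr A B = A * B - B * A"

inductive_set fspan :: "'a::comm_ring_1 set \<Rightarrow> nat \<Rightarrow> 'a mat set \<Rightarrow> 'a mat set"
  for F m S where
  zero: "0\<^sub>m m m \<in> fspan F m S"
| base: "x \<in> S \<Longrightarrow> x \<in> fspan F m S"
| add: "x \<in> fspan F m S \<Longrightarrow> y \<in> fspan F m S \<Longrightarrow> x + y \<in> fspan F m S"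
| smult: "c \<in> F \<Longrightarrow> x \<in> fspan F m S \<Longrightarrow> c \<cdot>\<^sub>m x \<in> fspan F m S"

inductive_set lie_gen :: "'a::comm_ring_1 set \<Rightarrow> nat \<Rightarrow> 'a mat set \<Rightarrow> 'a mat set"
  for F m S where
  zero: "0\<^sub>m m m \<in> lie_gen F m S"
| base: "x \<in> S \<Longrightarrow> x \<in> lie_gen F m S"
| add: "x \<in> lie_gen F m S \<Longrightarrow> y \<in> lie_gen F m S \<Longrightarrow> x + y \<in> lie_gen F m S"
| smult: "c \<in> F \<Longrightarrow> x \<in> lie_gen F m S \<Longrightarrow> c \<cdot>\<^sub>m x \<in> lie_gen F m S"
| bracket: "x \<in> lie_gen F m S \<Longrightarrow> y \<in> lie_gen F m S \<Longrightarrow> mbr x y \<in> lie_gen F m S"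

definition lie_subalg :: "'a::comm_ring_1 set \<Rightarrow> nat \<Rightarrow> 'a mat set \<Rightarrow> bool" where
  "lie_subalg F m g \<longleftrightarrow> g \<subseteq> carrier_mat m m \<and> 0\<^sub>m m m \<in> g \<and>
     (\<forall>x\<in>g. \<forall>y\<in>g. x + y \<in> g \<and> mbr x y \<in> g) \<and> (\<forall>c\<in>F. \<forall>x\<in>g. c \<cdot>\<^sub>m x \<in> g)"

definition lie_ideal :: "'a::comm_ring_1 set \<Rightarrow> nat \<Rightarrow> 'a mat set \<Rightarrow> 'a mat set \<Rightarrow> bool" where
  "lie_ideal F m g a \<longleftrightarrow> a \<subseteq> g \<and> 0\<^sub>m m m \<in> a \<and>
     (\<forall>x\<in>a. \<forall>y\<in>a. x + y \<in> a) \<and> (\<forall>c\<in>F. \<forall>x\<in>a. c \<cdot>\<^sub>m x \<in> a) \<and>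
     (\<forall>x\<in>g. \<forall>y\<in>a. mbr x y \<in> a)"

definition derived :: "'a::comm_ring_1 set \<Rightarrow> nat \<Rightarrow> 'a mat set \<Rightarrow> 'a mat set" where
  "derived F m a = fspan F m {mbr x y | x y. x \<in> a \<and> y \<in> a}"

definition lie_solvable :: "'a::comm_ring_1 set \<Rightarrow> nat \<Rightarrow> 'a mat set \<Rightarrow> bool" where
  "lie_solvable F m a \<longleftrightarrow> (\<exists>k. (derived F m ^^ k) a = {0\<^sub>m m m})"

definition lie_center :: "nat \<Rightarrow> 'a::comm_ring_1 mat set \<Rightarrow> 'a mat set" where
  "lie_center m g = {z \<in> g. \<forall>x\<in>g. mbr z x = 0\<^sub>m m m}"

text \<open>Reductive: the radical equals the center, i.e. every solvable ideal lies in the center.\<close>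
definition lie_reductive :: "'a::comm_ring_1 set \<Rightarrow> nat \<Rightarrow> 'a mat set \<Rightarrow> bool" where
  "lie_reductive F m g \<longleftrightarrow> lie_subalg F m g \<and>
     (\<forall>a. lie_ideal F m g a \<and> lie_solvable F m a \<longrightarrow> a \<subseteq> lie_center m g)"

text \<open>Semisimple: the radical is zero, i.e. every solvable ideal is zero.\<close>
definition lie_semisimple :: "'a::comm_ring_1 set \<Rightarrow> nat \<Rightarrow> 'a mat set \<Rightarrow> bool" where
  "lie_semisimple F m g \<longleftrightarrow> lie_subalg F m g \<and>
     (\<forall>a. lie_ideal F m g a \<and> lie_solvable F m a \<longrightarrow> a = {0\<^sub>m m m})"

text \<open>spin adj I r k i is the matrix rho_{r+k}(X_i) (vertices numbered 1..n, generators
  X_1..X_{r+k}), of size 2^k.\<close>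
fun spin :: "(nat \<Rightarrow> nat \<Rightarrow> bool) \<Rightarrow> 'a::field \<Rightarrow> nat \<Rightarrow> nat \<Rightarrow> nat \<Rightarrow> 'a mat" where
  "spin adj I r 0 i = mat 1 1 (\<lambda>_. I / 2)"
| "spin adj I r (Suc k) i =
     (let s = 2 ^ k; t = r + k; A = spin adj I r k i in
      if i = t + 1 then
        four_block_mat (0\<^sub>m s s) ((I / 2) \<cdot>\<^sub>m 1\<^sub>m s) ((I / 2) \<cdot>\<^sub>m 1\<^sub>m s) (0\<^sub>m s s)
      else
        four_block_mat A (0\<^sub>m s s) (0\<^sub>m s s) ((if adj i (t + 1) then - 1 else 1) \<cdot>\<^sub>m A))"

end

theory Submission
  imports Defs
begin

(* The image g of the spin representation is shown to be a "compact" Lie algebra: every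
   generator rho(X_i) has purely imaginary, symmetric entries, so it is skew-Hermitian with
   respect to the conjugation a + b I |-> a - b I of L = F(I) over F.  Skew-Hermitian matrices
   are closed under the F-Lie operations, hence g consists of skew-Hermitian matrices, and on
   them the invariant trace form tr(X Y) is negative definite: tr(Z Z) = - sum |Z_ij|^2 vanishes
   only for Z = 0, because F is formally real.  The classical argument for compact Lie algebras
   follows: an abelian ideal is central, an ideal with central derived algebra is abelian, and
   descending the derived series shows that every solvable ideal is central, i.e. g is
   reductive.  The centre is orthogonal to [g, g], so it vanishes when every generator is a
   bracket; without isolated vertices this holds because adjacent generators anticommute and
   square to -1/4, whence rho(X_j) = [- rho(X_i), [rho(X_i), rho(X_j)]]. *)

lemma row_col_sum:
  assumes "A \<in> carrier_mat m m" "B \<in> carrier_mat m m" "i < m" "j < m"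
  shows "row A i \<bullet> col B j = (\<Sum>k<m. A $$ (i, k) * B $$ (k, j))"
  using assms by (simp add: scalar_prod_def lessThan_atLeast0 mult.commute)

lemma mbr_carrier:
  "A \<in> carrier_mat m m \<Longrightarrow> B \<in> carrier_mat m m \<Longrightarrow> mbr A B \<in> carrier_mat m m"
  unfolding mbr_def by (simp add: minus_carrier_mat)

lemma mbr_jacobi:
  fixes X U V :: "'a::comm_ring_1 mat"
  assumes "X \<in> carrier_mat m m" "U \<in> carrier_mat m m" "V \<in> carrier_mat m m"
  shows "mbr X (mbr U V) = mbr (mbr X U) V + mbr U (mbr X V)"
  unfolding mbr_def using assms
  by (simp add: mult_minus_distrib_mat[where nr=m and n=m and nc=m]
      minus_mult_distrib_mat[where nr=m and n=m and nc=m])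
    (intro eq_matI; simp add: algebra_simps)

lemma mbr_antisym:
  fixes X U :: "'a::comm_ring_1 mat"
  assumes "X \<in> carrier_mat m m" "U \<in> carrier_mat m m"
  shows "mbr X U = - mbr U X"
  unfolding mbr_def using assms by (intro eq_matI) auto

lemma mbr_add_right:
  fixes X U V :: "'a::comm_ring_1 mat"
  assumes "X \<in> carrier_mat m m" "U \<in> carrier_mat m m" "V \<in> carrier_mat m m"
  shows "mbr X (U + V) = mbr X U + mbr X V"
  unfolding mbr_def using assms
  by (simp add: algebra_simps) (intro eq_matI; simp)

lemma mbr_smult_right:
  fixes X U :: "'a::comm_ring_1 mat"
  assumes "X \<in> carrier_mat m m" "U \<in> carrier_mat m m"
  shows "mbr X (c \<cdot>\<^sub>m U) = c \<cdot>\<^sub>m mbr X U"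
  unfolding mbr_def using assms
  by (simp add: mult_smult_distrib mult_smult_assoc_mat) (intro eq_matI; simp add: algebra_simps)

lemma mbr_zero:
  fixes X :: "'a::comm_ring_1 mat"
  assumes "X \<in> carrier_mat m m"
  shows "mbr X (0\<^sub>m m m) = 0\<^sub>m m m" "mbr (0\<^sub>m m m) X = 0\<^sub>m m m"
  unfolding mbr_def using assms by (auto intro!: eq_matI)

lemma commute_if_mbr_zero:
  fixes X Y :: "'a::comm_ring_1 mat"
  assumes X: "X \<in> carrier_mat m m" and Y: "Y \<in> carrier_mat m m" and zero: "mbr X Y = 0\<^sub>m m m"
  shows "X * Y = Y * X"
proof (rule eq_matI)
  fix i j assume ij: "i < dim_row (Y * X)" "j < dim_col (Y * X)"
  have "mbr X Y $$ (i, j) = 0" using zero ij X Y by simp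
  then show "(X * Y) $$ (i, j) = (Y * X) $$ (i, j)" unfolding mbr_def using ij X Y by simp
qed (use X Y in auto)

section \<open>The trace form\<close>

definition trace_form :: "nat \<Rightarrow> 'a::comm_ring_1 mat \<Rightarrow> 'a mat \<Rightarrow> 'a" where
  "trace_form m A B = (\<Sum>i<m. \<Sum>k<m. A $$ (i, k) * B $$ (k, i))"

lemma trace_form_sym: "trace_form m A B = trace_form m B A"
  unfolding trace_form_def by (subst sum.swap) (simp add: mult.commute)

text \<open>Associativity \<open>tr(A (B C)) = tr((A B) C)\<close>, the source of invariance.\<close>
lemma trace_form_assoc:
  assumes "A \<in> carrier_mat m m" "B \<in> carrier_mat m m" "C \<in> carrier_mat m m"
  shows "trace_form m A (B * C) = trace_form m (A * B) C"
proof -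
  have "trace_form m A (B * C) = (\<Sum>i<m. \<Sum>k<m. \<Sum>l<m. A $$ (i, k) * (B $$ (k, l) * C $$ (l, i)))"
    unfolding trace_form_def using assms
    by (intro sum.cong refl) (simp add: row_col_sum[OF assms(2,3)] sum_distrib_left)
  also have "\<dots> = (\<Sum>i<m. \<Sum>l<m. \<Sum>k<m. A $$ (i, k) * B $$ (k, l) * C $$ (l, i))"
    by (rule sum.cong, simp, subst sum.swap) (simp add: mult.assoc)
  also have "\<dots> = trace_form m (A * B) C"
    unfolding trace_form_def using assms
    by (intro sum.cong refl) (simp add: row_col_sum[OF assms(1,2)] sum_distrib_right)
  finally show ?thesis .
qed

lemma trace_form_add:
  "B \<in> carrier_mat m m \<Longrightarrow> C \<in> carrier_mat m m \<Longrightarrow>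
   trace_form m A (B + C) = trace_form m A B + trace_form m A C"
  unfolding trace_form_def by (simp add: distrib_left sum.distrib)

lemma trace_form_diff:
  "B \<in> carrier_mat m m \<Longrightarrow> C \<in> carrier_mat m m \<Longrightarrow>
   trace_form m A (B - C) = trace_form m A B - trace_form m A C"
  unfolding trace_form_def by (simp add: right_diff_distrib sum_subtractf)

lemma trace_form_smult:
  "B \<in> carrier_mat m m \<Longrightarrow> trace_form m A (c \<cdot>\<^sub>m B) = c * trace_form m A B"
  unfolding trace_form_def by (simp add: sum_distrib_left algebra_simps)

lemma trace_form_zero: "trace_form m A (0\<^sub>m m m) = 0"
  unfolding trace_form_def by simp

lemma trace_form_bracket_zero:
  assumes Z: "Z \<in> carrier_mat m m" and X: "X \<in> carrier_mat m m" and Y: "Y \<in> carrier_mat m m"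
    and comm: "Z * X = X * Z \<or> Z * Y = Y * Z"
  shows "trace_form m Z (mbr X Y) = 0"
proof -
  have expand: "trace_form m Z (mbr X Y) = trace_form m (Z * X) Y - trace_form m (Z * Y) X"
    unfolding mbr_def using assms by (simp add: trace_form_diff trace_form_assoc)
  have cyc_X: "trace_form m (Z * Y) X = trace_form m (X * Z) Y"
    using assms by (simp add: trace_form_sym[of m "Z * Y"] trace_form_assoc)
  have cyc_Y: "trace_form m (Z * X) Y = trace_form m (Y * Z) X"
    using assms by (simp add: trace_form_sym[of m "Z * X"] trace_form_assoc)
  from comm show ?thesis
    using expand cyc_X cyc_Y by auto
qed

section \<open>Conjugation on the quadratic extension \<open>F(I)\<close>\<close>

locale imaginary_extension =
  fixes F :: "'l::field set" and I :: 'l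
  assumes subfield: "subfield_of F" and real: "formally_real F" and I_square: "I ^ 2 = - 1"
    and spans: "\<forall>z::'l. \<exists>a\<in>F. \<exists>b\<in>F. z = a + b * I"
begin

lemma F_0: "0 \<in> F" and F_1: "1 \<in> F"
  and F_add: "x \<in> F \<Longrightarrow> y \<in> F \<Longrightarrow> x + y \<in> F"
  and F_mult: "x \<in> F \<Longrightarrow> y \<in> F \<Longrightarrow> x * y \<in> F"
  and F_uminus: "x \<in> F \<Longrightarrow> - x \<in> F"
  and F_inverse: "x \<in> F \<Longrightarrow> inverse x \<in> F"
  using subfield unfolding subfield_of_def by auto

lemma F_diff: "x \<in> F \<Longrightarrow> y \<in> F \<Longrightarrow> x - y \<in> F"
  using F_add F_uminus by (metis diff_conv_add_uminus)

lemma F_divide: "x \<in> F \<Longrightarrow> y \<in> F \<Longrightarrow> x / y \<in> F"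
  using F_mult F_inverse by (metis divide_inverse)

lemma I_times_I: "I * I = - 1"
  using I_square by (simp add: power2_eq_square)

text \<open>\<open>F\<close> does not have characteristic 2, since otherwise \<open>1\<^sup>2 = -1\<close>.\<close>
lemma two_nonzero: "(2::'l) \<noteq> 0"
proof
  assume "(2::'l) = 0"
  then have "(\<Sum>x\<leftarrow>[1::'l]. x ^ 2) = - 1" by (simp add: eq_neg_iff_add_eq_0)
  moreover have "set [1::'l] \<subseteq> F" using F_1 by simp
  ultimately show False using real unfolding formally_real_def by blast
qed

text \<open>\<open>I\<close> is not in \<open>F\<close>, since \<open>I\<^sup>2 = -1\<close> would be a sum of one square.\<close>
lemma I_notin_F: "I \<notin> F"
proof
  assume "I \<in> F"
  then have "set [I] \<subseteq> F" by simp
  moreover have "(\<Sum>x\<leftarrow>[I]. x ^ 2) = - 1" using I_square by simp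
  ultimately show False using real unfolding formally_real_def by blast
qed

lemma decomposition_unique:
  assumes "a \<in> F" "b \<in> F" "c \<in> F" "d \<in> F" "a + b * I = c + d * I"
  shows "a = c \<and> b = d"
proof (cases "b = d")
  case True then show ?thesis using assms(5) by simp
next
  case False
  have "(b - d) * I = c - a" using assms(5) by (simp add: algebra_simps)
  then have "I = (c - a) / (b - d)" using False by (simp add: field_simps)
  then have "I \<in> F" using F_divide F_diff assms by simp
  then show ?thesis using I_notin_F by simp
qed

definition re :: "'l \<Rightarrow> 'l" where "re z = (SOME a. a \<in> F \<and> (\<exists>b\<in>F. z = a + b * I))"
definition im :: "'l \<Rightarrow> 'l" where "im z = (SOME b. b \<in> F \<and> z = re z + b * I)"

lemma re_im: "re z \<in> F" "im z \<in> F" "z = re z + im z * I"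
proof -
  have re: "re z \<in> F \<and> (\<exists>b\<in>F. z = re z + b * I)"
    unfolding re_def by (rule someI_ex) (use spans in blast)
  have "im z \<in> F \<and> z = re z + im z * I"
    unfolding im_def by (rule someI_ex) (use re in blast)
  then show "re z \<in> F" "im z \<in> F" "z = re z + im z * I" using re by auto
qed

lemma re_im_eq: assumes "a \<in> F" "b \<in> F" shows "re (a + b * I) = a" "im (a + b * I) = b"
proof -
  have "re (a + b * I) = a \<and> im (a + b * I) = b"
    by (rule decomposition_unique[OF re_im(1,2) assms]) (metis re_im(3))
  then show "re (a + b * I) = a" "im (a + b * I) = b" by auto
qed

definition conj :: "'l \<Rightarrow> 'l" where "conj z = re z - im z * I"

lemma conj_eq: "a \<in> F \<Longrightarrow> b \<in> F \<Longrightarrow> conj (a + b * I) = a - b * I"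
  unfolding conj_def using re_im_eq by simp

lemma conj_F: "c \<in> F \<Longrightarrow> conj c = c"
  using conj_eq[OF _ F_0, of c] by simp

lemma conj_F_I: "c \<in> F \<Longrightarrow> conj (c * I) = - (c * I)"
  using conj_eq[OF F_0, of c] by simp

lemma conj_add: "conj (x + y) = conj x + conj y"
proof -
  have "x + y = (re x + re y) + (im x + im y) * I"
    by (subst re_im(3)[of x], subst re_im(3)[of y]) (simp add: algebra_simps)
  then show ?thesis using conj_eq[of "re x + re y" "im x + im y"] re_im F_add
    unfolding conj_def[of x] conj_def[of y] by (simp add: algebra_simps)
qed

lemma conj_diff: "conj (x - y) = conj x - conj y"
  using conj_add[of "x - y" y] by simp

lemma product_decomposition: "(a + b * I) * (c + d * I) = (a * c - b * d) + (a * d + b * c) * I"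
proof -
  have "(a + b * I) * (c + d * I) = a * c + (a * d + b * c) * I + (b * d) * (I * I)"
    by (simp add: algebra_simps)
  then show ?thesis using I_times_I by simp
qed

lemma conj_mult: "conj (x * y) = conj x * conj y"
proof -
  have xy: "x * y = (re x * re y - im x * im y) + (re x * im y + im x * re y) * I"
    using product_decomposition[of "re x" "im x" "re y" "im y"] re_im(3)[of x] re_im(3)[of y]
    by simp
  have "conj x * conj y = (re x + (- im x) * I) * (re y + (- im y) * I)"
    unfolding conj_def by simp
  also have "\<dots> = (re x * re y - im x * im y) - (re x * im y + im x * re y) * I"
    by (subst product_decomposition) (simp add: algebra_simps)
  finally show ?thesis
    unfolding xy using re_im F_add F_mult F_diff by (subst conj_eq) auto
qed

lemma conj_sum: "conj (sum f A) = (\<Sum>x\<in>A. conj (f x))"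
  by (induction A rule: infinite_finite_induct) (auto simp: conj_F[OF F_0] conj_add)

lemma mult_conj: "z * conj z = re z ^ 2 + im z ^ 2"
proof -
  have "z * conj z = (re z + im z * I) * (re z + (- im z) * I)"
    unfolding conj_def by (subst re_im(3)[of z], simp)
  also have "\<dots> = re z ^ 2 + im z ^ 2"
    by (subst product_decomposition) (simp add: algebra_simps power2_eq_square)
  finally show ?thesis .
qed

lemma sum_squares_zero:
  assumes fin: "finite P" and in_F: "\<forall>p\<in>P. f p \<in> F" and zero: "(\<Sum>p\<in>P. f p ^ 2) = 0"
  shows "\<forall>p\<in>P. f p = 0"
proof (rule ccontr)
  assume "\<not> ?thesis"
  then obtain p0 where p0: "p0 \<in> P" "f p0 \<noteq> 0" by auto
  have "(\<Sum>p\<in>P. f p ^ 2) = f p0 ^ 2 + (\<Sum>p\<in>P - {p0}. f p ^ 2)"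
    using fin p0 by (simp add: sum.remove)
  then have rest: "(\<Sum>p\<in>P - {p0}. f p ^ 2) = - (f p0 ^ 2)"
    using zero by (simp add: eq_neg_iff_add_eq_0 add.commute)
  have "(\<Sum>p\<in>P - {p0}. (f p / f p0) ^ 2) = (\<Sum>p\<in>P - {p0}. f p ^ 2) / f p0 ^ 2"
    by (simp add: power_divide sum_divide_distrib)
  also have "\<dots> = - 1" using rest p0 by simp
  finally have minus_one: "(\<Sum>p\<in>P - {p0}. (f p / f p0) ^ 2) = - 1" .
  obtain ys where ys: "set ys = P - {p0}" "distinct ys"
    using fin by (metis finite_Diff finite_distinct_list)
  let ?xs = "map (\<lambda>p. f p / f p0) ys"
  have "set ?xs \<subseteq> F" using ys in_F p0 F_divide by auto
  then have "(\<Sum>x\<leftarrow>?xs. x ^ 2) \<noteq> - 1" using real unfolding formally_real_def by blast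
  moreover have "(\<Sum>x\<leftarrow>?xs. x ^ 2) = (\<Sum>p\<in>P - {p0}. (f p / f p0) ^ 2)"
    using ys by (simp add: o_def sum_list_distinct_conv_sum_set)
  ultimately show False using minus_one by simp
qed

section \<open>Skew-Hermitian matrices\<close>

definition skew_hermitian :: "nat \<Rightarrow> 'l mat \<Rightarrow> bool" where
  "skew_hermitian m Z \<longleftrightarrow> Z \<in> carrier_mat m m \<and> (\<forall>i<m. \<forall>j<m. conj (Z $$ (i, j)) = - Z $$ (j, i))"

lemma skew_hermitian_carrier: "skew_hermitian m Z \<Longrightarrow> Z \<in> carrier_mat m m"
  unfolding skew_hermitian_def by simp

lemma skew_hermitian_zero: "skew_hermitian m (0\<^sub>m m m)"
  unfolding skew_hermitian_def by (simp add: conj_F[OF F_0])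

lemma skew_hermitian_add: "skew_hermitian m X \<Longrightarrow> skew_hermitian m Y \<Longrightarrow> skew_hermitian m (X + Y)"
  unfolding skew_hermitian_def by (auto simp: conj_add)

lemma skew_hermitian_smult: "c \<in> F \<Longrightarrow> skew_hermitian m X \<Longrightarrow> skew_hermitian m (c \<cdot>\<^sub>m X)"
  unfolding skew_hermitian_def by (auto simp: conj_mult conj_F)

lemma skew_hermitian_mbr:
  assumes X: "skew_hermitian m X" and Y: "skew_hermitian m Y"
  shows "skew_hermitian m (mbr X Y)"
proof -
  have cX: "X \<in> carrier_mat m m" and cY: "Y \<in> carrier_mat m m"
    using X Y by (auto simp: skew_hermitian_carrier)
  have eX: "\<And>i j. i < m \<Longrightarrow> j < m \<Longrightarrow> conj (X $$ (i, j)) = - X $$ (j, i)"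
    and eY: "\<And>i j. i < m \<Longrightarrow> j < m \<Longrightarrow> conj (Y $$ (i, j)) = - Y $$ (j, i)"
    using X Y unfolding skew_hermitian_def by blast+
  have "conj (mbr X Y $$ (i, j)) = - mbr X Y $$ (j, i)" if ij: "i < m" "j < m" for i j
  proof -
    have "conj (mbr X Y $$ (i, j))
        = (\<Sum>k<m. conj (X $$ (i, k)) * conj (Y $$ (k, j)))
          - (\<Sum>k<m. conj (Y $$ (i, k)) * conj (X $$ (k, j)))"
      unfolding mbr_def using cX cY ij by (simp add: row_col_sum conj_diff conj_sum conj_mult)
    also have "\<dots> = (\<Sum>k<m. Y $$ (j, k) * X $$ (k, i)) - (\<Sum>k<m. X $$ (j, k) * Y $$ (k, i))"
      using ij by (simp add: eX eY mult.commute)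
    also have "\<dots> = - mbr X Y $$ (j, i)"
      unfolding mbr_def using cX cY ij by (simp add: row_col_sum)
    finally show ?thesis .
  qed
  then show ?thesis unfolding skew_hermitian_def using mbr_carrier[OF cX cY] by auto
qed

text \<open>Definiteness: \<open>tr(Z Z) = - \<Sum> |Z\<^sub>i\<^sub>j|\<^sup>2\<close> vanishes only for \<open>Z = 0\<close>.\<close>
lemma skew_hermitian_trace_form_zero:
  assumes Z: "skew_hermitian m Z" and zero: "trace_form m Z Z = 0"
  shows "Z = 0\<^sub>m m m"
proof -
  let ?P = "{..<m} \<times> {..<m}"
  define f where "f = case_sum (\<lambda>p. re (Z $$ p)) (\<lambda>p. im (Z $$ p))"
  have "trace_form m Z Z = (\<Sum>i<m. \<Sum>k<m. - (Z $$ (i, k) * conj (Z $$ (i, k))))"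
    unfolding trace_form_def using Z unfolding skew_hermitian_def by (intro sum.cong refl) auto
  also have "\<dots> = (\<Sum>p\<in>?P. - (re (Z $$ p) ^ 2 + im (Z $$ p) ^ 2))"
    by (simp add: mult_conj sum.cartesian_product split_def)
  also have "\<dots> = - (\<Sum>p\<in>?P. re (Z $$ p) ^ 2 + im (Z $$ p) ^ 2)"
    by (rule sum_negf)
  also have "(\<Sum>p\<in>?P. re (Z $$ p) ^ 2 + im (Z $$ p) ^ 2) = (\<Sum>p\<in>?P <+> ?P. f p ^ 2)"
    unfolding f_def by (simp add: sum.Plus sum.distrib)
  finally have "(\<Sum>p\<in>?P <+> ?P. f p ^ 2) = 0" using zero by simp
  moreover have "\<forall>p\<in>?P <+> ?P. f p \<in> F" unfolding f_def using re_im by (auto split: sum.splits)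
  ultimately have parts_zero: "\<forall>p\<in>?P <+> ?P. f p = 0" by (intro sum_squares_zero) auto
  show ?thesis
  proof (rule eq_matI)
    fix i j assume ij: "i < dim_row (0\<^sub>m m m)" "j < dim_col (0\<^sub>m m m)"
    then have "f (Inl (i, j)) = 0" "f (Inr (i, j)) = 0" using parts_zero by auto
    then have "re (Z $$ (i, j)) = 0" "im (Z $$ (i, j)) = 0" unfolding f_def by auto
    then show "Z $$ (i, j) = 0\<^sub>m m m $$ (i, j)" using ij re_im(3)[of "Z $$ (i, j)"] by simp
  qed (use Z skew_hermitian_carrier in auto)
qed

end

section \<open>Lie algebras generated by skew-Hermitian matrices\<close>

locale skew_hermitian_generated = imaginary_extension F I for F :: "'l::field set" and I :: 'l +
  fixes m :: nat and S :: "'l mat set"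
  assumes generators_skew_hermitian: "\<forall>s\<in>S. skew_hermitian m s"
begin

abbreviation g :: "'l mat set" where "g \<equiv> lie_gen F m S"

lemma g_skew_hermitian: "x \<in> g \<Longrightarrow> skew_hermitian m x"
  by (induction rule: lie_gen.induct)
    (use generators_skew_hermitian skew_hermitian_zero skew_hermitian_add skew_hermitian_smult
      skew_hermitian_mbr in auto)

lemma g_carrier: "x \<in> g \<Longrightarrow> x \<in> carrier_mat m m"
  using g_skew_hermitian skew_hermitian_carrier by blast

lemma g_subalgebra: "lie_subalg F m g"
  unfolding lie_subalg_def using g_carrier by (auto intro: lie_gen.intros)

lemma g_trace_form_zero: "z \<in> g \<Longrightarrow> trace_form m z z = 0 \<Longrightarrow> z = 0\<^sub>m m m"
  using skew_hermitian_trace_form_zero g_skew_hermitian by blast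

lemma derived_subset:
  assumes a: "lie_ideal F m g a" shows "derived F m a \<subseteq> g"
proof
  fix x assume "x \<in> derived F m a"
  then show "x \<in> g" unfolding derived_def
  proof (induction rule: fspan.induct)
    case (base x) then show ?case using a unfolding lie_ideal_def by (auto intro: lie_gen.intros)
  qed (auto intro: lie_gen.intros)
qed

lemma derived_ideal:
  assumes a: "lie_ideal F m g a" shows "lie_ideal F m g (derived F m a)"
proof -
  let ?B = "{mbr x y |x y. x \<in> a \<and> y \<in> a}"
  have a_g: "a \<subseteq> g" and a_ideal: "\<forall>x\<in>g. \<forall>y\<in>a. mbr x y \<in> a"
    using a unfolding lie_ideal_def by auto
  have "mbr x y \<in> fspan F m ?B" if x: "x \<in> g" and y: "y \<in> fspan F m ?B" for x y
    using y
  proof (induction rule: fspan.induct)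
    case zero then show ?case using mbr_zero(1)[OF g_carrier[OF x]] by (auto intro: fspan.intros)
  next
    case (base z)
    then obtain u v where z: "z = mbr u v" "u \<in> a" "v \<in> a" by auto
    then have "mbr x z = mbr (mbr x u) v + mbr u (mbr x v)"
      using mbr_jacobi[OF g_carrier[OF x]] a_g g_carrier by blast
    moreover have "mbr (mbr x u) v \<in> fspan F m ?B" "mbr u (mbr x v) \<in> fspan F m ?B"
      using a_ideal x z by (auto intro!: fspan.base)
    ultimately show ?case by (auto intro: fspan.add)
  next
    case (add y1 y2)
    then have "y1 \<in> g" "y2 \<in> g" using derived_subset[OF a] unfolding derived_def by auto
    then show ?case using mbr_add_right[OF g_carrier[OF x] g_carrier g_carrier] add
      by (auto intro: fspan.add)
  next
    case (smult c y)
    then have "y \<in> g" using derived_subset[OF a] unfolding derived_def by auto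
    then show ?case using mbr_smult_right[OF g_carrier[OF x] g_carrier] smult
      by (auto intro: fspan.smult)
  qed
  then show ?thesis using derived_subset[OF a] unfolding lie_ideal_def derived_def
    by (auto intro: fspan.intros)
qed

text \<open>An abelian ideal is central: for \<open>y \<in> a\<close>, \<open>x \<in> g\<close> the element
  \<open>z = [x, y]\<close> lies in \<open>a\<close>, so commutes with \<open>y\<close>, and
  \<open>tr(z z) = tr(z [x, y]) = 0\<close>.\<close>
lemma abelian_ideal_central:
  assumes a: "lie_ideal F m g a" and abelian: "\<forall>u\<in>a. \<forall>v\<in>a. mbr u v = 0\<^sub>m m m"
  shows "a \<subseteq> lie_center m g"
proof
  fix y assume y: "y \<in> a"
  have a_g: "a \<subseteq> g" and a_ideal: "\<forall>x\<in>g. \<forall>y\<in>a. mbr x y \<in> a"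
    using a unfolding lie_ideal_def by blast+
  have y_g: "y \<in> g" using a_g y by blast
  have "mbr y x = 0\<^sub>m m m" if x: "x \<in> g" for x
  proof -
    let ?z = "mbr x y"
    have z_a: "?z \<in> a" using a_ideal x y by blast
    have z_g: "?z \<in> g" using x y_g by (rule lie_gen.bracket)
    have "?z * y = y * ?z"
      using abelian y z_a commute_if_mbr_zero[OF g_carrier[OF y_g] g_carrier[OF z_g]] by simp
    then have "trace_form m ?z ?z = 0"
      by (intro trace_form_bracket_zero) (use g_carrier x y_g z_g in auto)
    then have "?z = 0\<^sub>m m m" using g_trace_form_zero z_g by blast
    then show ?thesis using mbr_antisym[OF g_carrier[OF y_g] g_carrier[OF x]] by auto
  qed
  then show "y \<in> lie_center m g" unfolding lie_center_def using y_g by blast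
qed

text \<open>An ideal whose derived algebra is central is abelian: a central \<open>w = [u, v]\<close>
  commutes with \<open>u\<close>, hence \<open>tr(w w) = 0\<close>.\<close>
lemma derived_central_abelian:
  assumes a: "lie_ideal F m g a" and central: "derived F m a \<subseteq> lie_center m g"
  shows "\<forall>u\<in>a. \<forall>v\<in>a. mbr u v = 0\<^sub>m m m"
proof (intro ballI)
  fix u v assume u: "u \<in> a" and v: "v \<in> a"
  have u_g: "u \<in> g" and v_g: "v \<in> g" using a u v unfolding lie_ideal_def by auto
  let ?w = "mbr u v"
  have "?w \<in> derived F m a" unfolding derived_def using u v by (auto intro: fspan.base)
  then have w_g: "?w \<in> g" and "mbr ?w u = 0\<^sub>m m m"
    using central u_g unfolding lie_center_def by auto
  then have "?w * u = u * ?w" using commute_if_mbr_zero g_carrier u_g by blast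
  then have "trace_form m ?w ?w = 0"
    by (intro trace_form_bracket_zero) (use g_carrier w_g u_g v_g in auto)
  then show "?w = 0\<^sub>m m m" using g_trace_form_zero w_g by blast
qed

lemma derived_central_implies_central:
  "lie_ideal F m g a \<Longrightarrow> derived F m a \<subseteq> lie_center m g \<Longrightarrow> a \<subseteq> lie_center m g"
  using abelian_ideal_central derived_central_abelian by blast

text \<open>Every solvable ideal is central: descend the derived series from its zero term.\<close>
theorem reductive: "lie_reductive F m g"
  unfolding lie_reductive_def
proof (intro conjI g_subalgebra allI impI, elim conjE)
  fix a assume a: "lie_ideal F m g a" and solvable: "lie_solvable F m a"
  define D where "D j = (derived F m ^^ j) a" for j
  have D_ideal: "lie_ideal F m g (D j)" for j
    unfolding D_def by (induction j) (auto simp: a derived_ideal)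
  obtain k where k: "D k = {0\<^sub>m m m}" using solvable unfolding lie_solvable_def D_def by auto
  have "D (k - j) \<subseteq> lie_center m g" if "j \<le> k" for j
    using that
  proof (induction j)
    case 0
    have "0\<^sub>m m m \<in> lie_center m g" unfolding lie_center_def
      using mbr_zero(2) g_carrier by (auto intro: lie_gen.zero)
    then show ?case using k by simp
  next
    case (Suc j)
    then have "derived F m (D (k - Suc j)) = D (k - j)"
      unfolding D_def by (metis Suc_diff_Suc Suc_le_lessD funpow.simps(2) o_apply)
    also have "\<dots> \<subseteq> lie_center m g" using Suc by simp
    finally show ?case using derived_central_implies_central D_ideal by blast
  qed
  from this[of k] show "a \<subseteq> lie_center m g" unfolding D_def by simp
qed

text \<open>If every generator is a bracket, the centre is orthogonal to all of \<open>g\<close>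
  (which is spanned by brackets), hence zero.\<close>
lemma center_zero:
  assumes brackets: "\<forall>s\<in>S. \<exists>x\<in>g. \<exists>y\<in>g. s = mbr x y" and z: "z \<in> lie_center m g"
  shows "z = 0\<^sub>m m m"
proof -
  let ?B = "{mbr x y | x y. x \<in> g \<and> y \<in> g}"
  have z_g: "z \<in> g" using z unfolding lie_center_def by auto
  have spanned: "w \<in> fspan F m ?B" if "w \<in> g" for w
    using that
  proof (induction rule: lie_gen.induct)
    case (base x) then show ?case using brackets by (blast intro: fspan.base)
  qed (auto intro: fspan.intros)
  have "trace_form m z w = 0 \<and> w \<in> carrier_mat m m" if "w \<in> fspan F m ?B" for w
    using that
  proof (induction rule: fspan.induct)
    case (base w)
    then obtain x y where w: "w = mbr x y" "x \<in> g" "y \<in> g" by auto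
    then have "z * x = x * z"
      using z commute_if_mbr_zero g_carrier z_g unfolding lie_center_def by blast
    then show ?case using trace_form_bracket_zero g_carrier z_g w mbr_carrier by metis
  qed (simp_all add: trace_form_zero trace_form_add trace_form_smult)
  then show ?thesis using spanned[OF z_g] g_trace_form_zero z_g by blast
qed

theorem semisimple:
  assumes "\<forall>s\<in>S. \<exists>x\<in>g. \<exists>y\<in>g. s = mbr x y"
  shows "lie_semisimple F m g"
proof -
  have "a = {0\<^sub>m m m}" if "lie_ideal F m g a" "lie_solvable F m a" for a
  proof -
    have "a \<subseteq> lie_center m g" using reductive that unfolding lie_reductive_def by blast
    then have "a \<subseteq> {0\<^sub>m m m}" using center_zero[OF assms] by blast
    moreover have "0\<^sub>m m m \<in> a" using that unfolding lie_ideal_def by auto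
    ultimately show ?thesis by blast
  qed
  then show ?thesis unfolding lie_semisimple_def using g_subalgebra by blast
qed

end

section \<open>The spin matrices\<close>

abbreviation diag_block :: "'a::comm_ring_1 mat \<Rightarrow> 'a \<Rightarrow> nat \<Rightarrow> 'a mat" where
  "diag_block A a s \<equiv> four_block_mat A (0\<^sub>m s s) (0\<^sub>m s s) (a \<cdot>\<^sub>m A)"

abbreviation swap_block :: "'a::comm_ring_1 \<Rightarrow> nat \<Rightarrow> 'a mat" where
  "swap_block c s \<equiv> four_block_mat (0\<^sub>m s s) (c \<cdot>\<^sub>m 1\<^sub>m s) (c \<cdot>\<^sub>m 1\<^sub>m s) (0\<^sub>m s s)"

lemmas mult_square_blocks =
  mult_four_block_mat[where ?nr1.0=s and ?n1.0=s and ?n2.0=s and ?nr2.0=s and ?nc1.0=s and ?nc2.0=s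
    for s]

lemma diag_block_mult:
  assumes "A \<in> carrier_mat s s" "B \<in> carrier_mat s s"
  shows "diag_block A a s * diag_block B b s = diag_block (A * B) (a * b) s"
  by (subst mult_square_blocks) (use assms in \<open>auto simp: mult_smult_distrib mult_smult_assoc_mat\<close>)

lemma smult_diag_block:
  "A \<in> carrier_mat s s \<Longrightarrow> c \<cdot>\<^sub>m diag_block A a s = diag_block (c \<cdot>\<^sub>m A) a s"
  by (intro eq_matI) auto

lemma swap_block_square: "swap_block c s * swap_block c s = (c * c) \<cdot>\<^sub>m 1\<^sub>m (s + s)"
  by (subst mult_square_blocks) (auto intro!: eq_matI)

lemma swap_block_anticomm:
  assumes A: "A \<in> carrier_mat s s"
  shows "swap_block c s * diag_block A (-1) s = (-1) \<cdot>\<^sub>m (diag_block A (-1) s * swap_block c s)"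
    and "diag_block A (-1) s * swap_block c s = (-1) \<cdot>\<^sub>m (swap_block c s * diag_block A (-1) s)"
proof -
  have unit: "unit_vec s i \<bullet> col A k = A $$ (i, k)" if "i < s" "k < s" for i k
    using A that by simp
  have "swap_block c s * diag_block A (-1) s
      = four_block_mat (0\<^sub>m s s) (- c \<cdot>\<^sub>m A) (c \<cdot>\<^sub>m A) (0\<^sub>m s s)"
    by (subst mult_square_blocks) (use A in \<open>auto intro!: eq_matI simp: unit\<close>)
  moreover have "diag_block A (-1) s * swap_block c s
      = four_block_mat (0\<^sub>m s s) (c \<cdot>\<^sub>m A) (- c \<cdot>\<^sub>m A) (0\<^sub>m s s)"
    by (subst mult_square_blocks) (use A in \<open>auto intro!: eq_matI simp: unit\<close>)
  ultimately show "swap_block c s * diag_block A (-1) s = (-1) \<cdot>\<^sub>m (diag_block A (-1) s * swap_block c s)"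
    and "diag_block A (-1) s * swap_block c s = (-1) \<cdot>\<^sub>m (swap_block c s * diag_block A (-1) s)"
    using A by (auto intro!: eq_matI)
qed

lemma spin_Suc_new: "spin adj I r (Suc k) (r + k + 1) = swap_block (I / 2) (2 ^ k)"
  by (simp add: Let_def)

lemma spin_Suc_old:
  "i \<noteq> r + k + 1 \<Longrightarrow>
   spin adj I r (Suc k) i = diag_block (spin adj I r k i) (if adj i (r + k + 1) then -1 else 1) (2 ^ k)"
  by (simp add: Let_def)

lemma spin_carrier: "spin adj I r k i \<in> carrier_mat (2 ^ k) (2 ^ k)"
  by (induction k) (auto simp: Let_def mult_2)

lemma spin_dim [simp]: "dim_row (spin adj I r k i) = 2 ^ k" "dim_col (spin adj I r k i) = 2 ^ k"
  using spin_carrier by blast+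

lemma spin_square: "spin adj I r k i * spin adj I r k i = ((I / 2) * (I / 2)) \<cdot>\<^sub>m 1\<^sub>m (2 ^ k)"
proof (induction k)
  case 0
  show ?case by (auto intro!: eq_matI simp: scalar_prod_def)
next
  case (Suc k)
  let ?s = "2 ^ k :: nat" and ?A = "spin adj I r k i" and ?e = "if adj i (r + k + 1) then -1 else 1"
  have size: "(2::nat) ^ Suc k = ?s + ?s" by simp
  show ?case
  proof (cases "i = r + k + 1")
    case True
    then show ?thesis using swap_block_square[where c = "I / 2" and s = ?s] by (simp only: spin_Suc_new size)
  next
    case False
    have "spin adj I r (Suc k) i * spin adj I r (Suc k) i = diag_block (?A * ?A) (?e * ?e) ?s"
      unfolding spin_Suc_old[OF False] by (rule diag_block_mult[OF spin_carrier spin_carrier])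
    also have "\<dots> = diag_block (((I / 2) * (I / 2)) \<cdot>\<^sub>m 1\<^sub>m ?s) 1 ?s"
      using Suc.IH by simp
    also have "\<dots> = ((I / 2) * (I / 2)) \<cdot>\<^sub>m 1\<^sub>m (2 ^ Suc k)"
      by (auto intro!: eq_matI)
    finally show ?thesis .
  qed
qed

lemma spin_anticomm:
  assumes sym: "\<forall>i j. adj i j \<longrightarrow> adj j i" and irrefl: "\<forall>i. \<not> adj i i"
    and indep: "\<forall>i\<in>{1..r}. \<forall>j\<in>{1..r}. \<not> adj i j"
  shows "i \<in> {1..r + k} \<Longrightarrow> j \<in> {1..r + k} \<Longrightarrow> adj i j \<Longrightarrow>
    spin adj I r k i * spin adj I r k j = (-1) \<cdot>\<^sub>m (spin adj I r k j * spin adj I r k i)"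
proof (induction k arbitrary: i j)
  case 0 then show ?case using indep by auto
next
  case (Suc k)
  let ?s = "2 ^ k :: nat" and ?t = "r + k + 1"
  let ?A = "spin adj I r k i" and ?B = "spin adj I r k j"
  let ?e = "\<lambda>x. if adj x ?t then -1 else 1"
  have new: "spin adj I r (Suc k) ?t = swap_block (I / 2) ?s"
    by (rule spin_Suc_new)
  have old: "spin adj I r (Suc k) x = diag_block (spin adj I r k x) (?e x) ?s" if "x \<noteq> ?t" for x
    by (rule spin_Suc_old[OF that])
  consider "i = ?t" | "j = ?t" | "i \<noteq> ?t" "j \<noteq> ?t" by blast
  then show ?case
  proof cases
    case 1
    then have "j \<noteq> ?t" "adj j ?t" using Suc.prems irrefl sym by auto
    then show ?thesis
      unfolding 1 new old[OF \<open>j \<noteq> ?t\<close>] by (simp add: swap_block_anticomm(1)[OF spin_carrier])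
  next
    case 2
    then have "i \<noteq> ?t" "adj i ?t" using Suc.prems irrefl sym by auto
    then show ?thesis
      unfolding 2 new old[OF \<open>i \<noteq> ?t\<close>] by (simp add: swap_block_anticomm(2)[OF spin_carrier])
  next
    case 3
    then have IH: "?A * ?B = (-1) \<cdot>\<^sub>m (?B * ?A)" using Suc by auto
    have "spin adj I r (Suc k) i * spin adj I r (Suc k) j = diag_block (?A * ?B) (?e i * ?e j) ?s"
      unfolding old[OF 3(1)] old[OF 3(2)] by (rule diag_block_mult[OF spin_carrier spin_carrier])
    also have "\<dots> = (-1) \<cdot>\<^sub>m diag_block (?B * ?A) (?e j * ?e i) ?s"
      unfolding IH
      by (subst smult_diag_block[OF mult_carrier_mat[OF spin_carrier spin_carrier]])
        (simp add: mult.commute)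
    also have "\<dots> = (-1) \<cdot>\<^sub>m (spin adj I r (Suc k) j * spin adj I r (Suc k) i)"
      unfolding old[OF 3(1)] old[OF 3(2)] by (simp add: diag_block_mult[OF spin_carrier spin_carrier])
    finally show ?thesis .
  qed
qed

lemma double_bracket_recovers:
  fixes A B :: "'a::comm_ring_1 mat"
  assumes A: "A \<in> carrier_mat m m" and B: "B \<in> carrier_mat m m"
    and square: "A * A = c \<cdot>\<^sub>m 1\<^sub>m m" and four_c: "4 * c = - 1"
    and anti: "A * B = (-1) \<cdot>\<^sub>m (B * A)"
  shows "B = mbr ((-1) \<cdot>\<^sub>m A) (mbr A B)"
proof -
  have scalar_left: "(c \<cdot>\<^sub>m 1\<^sub>m m) * B = c \<cdot>\<^sub>m B"
    using mult_smult_assoc_mat[OF one_carrier_mat B] B by simp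
  have scalar_right: "B * (c \<cdot>\<^sub>m 1\<^sub>m m) = c \<cdot>\<^sub>m B"
    using mult_smult_distrib[OF B one_carrier_mat] B by simp
  have AAB: "A * (A * B) = c \<cdot>\<^sub>m B"
    unfolding assoc_mult_mat[OF A A B, symmetric] square scalar_left ..
  have BAA: "B * (A * A) = c \<cdot>\<^sub>m B"
    unfolding square scalar_right ..
  have ABA: "A * (B * A) = (- c) \<cdot>\<^sub>m B"
  proof -
    have "A * (B * A) = (A * B) * A" using assoc_mult_mat[OF A B A] by simp
    also have "\<dots> = (-1) \<cdot>\<^sub>m (B * (A * A))"
      unfolding anti mult_smult_assoc_mat[OF mult_carrier_mat[OF B A] A] assoc_mult_mat[OF B A A] ..
    finally show ?thesis using BAA B by (auto intro!: eq_matI)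
  qed
  have inner: "mbr A B = 2 \<cdot>\<^sub>m (A * B)"
    unfolding mbr_def anti using A B by (auto intro!: eq_matI)
  have "mbr ((-1) \<cdot>\<^sub>m A) (mbr A B) = (-2) \<cdot>\<^sub>m (A * (A * B)) - (-2) \<cdot>\<^sub>m (A * (B * A))"
    unfolding inner unfolding mbr_def using A B
    by (simp add: mult_smult_assoc_mat[where nr=m and n=m and nc=m]
        mult_smult_distrib[where nr=m and n=m and nc=m] assoc_mult_mat[OF A B A])
      (intro eq_matI; simp)
  also have "\<dots> = B"
  proof -
    have "4 * (c * x) = - x" for x :: 'a
      using four_c by (metis mult.assoc mult.commute mult_minus1)
    then show ?thesis unfolding AAB ABA using B by (auto intro!: eq_matI)
  qed
  finally show ?thesis ..
qed

lemma spin_generators_are_brackets: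
  fixes I :: "'a::field"
  assumes sym: "\<forall>i j. adj i j \<longrightarrow> adj j i" and irrefl: "\<forall>i. \<not> adj i i"
    and indep: "\<forall>i\<in>{1..r}. \<forall>j\<in>{1..r}. \<not> adj i j" and r_le: "r \<le> n"
    and I_square: "I ^ 2 = - 1" and two: "(2::'a) \<noteq> 0" and minus_one: "- 1 \<in> F"
    and no_isolated: "\<forall>i\<in>{1..n}. \<exists>j\<in>{1..n}. adj i j"
  defines "S \<equiv> (\<lambda>i. spin adj I r (n - r) i) ` {1..n}"
  shows "\<forall>s\<in>S. \<exists>x\<in>lie_gen F (2 ^ (n - r)) S. \<exists>y\<in>lie_gen F (2 ^ (n - r)) S. s = mbr x y"
proof
  fix s assume "s \<in> S"
  then obtain j where j: "j \<in> {1..n}" "s = spin adj I r (n - r) j" unfolding S_def by blast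
  obtain i where i: "i \<in> {1..n}" "adj i j" using no_isolated j sym by blast
  let ?A = "spin adj I r (n - r) i"
  have "?A * s = (-1) \<cdot>\<^sub>m (s * ?A)"
    using spin_anticomm[OF sym irrefl indep, of i "n - r" j] i j r_le by auto
  moreover have "4 * ((I / 2) * (I / 2)) = - 1"
  proof -
    have "(4::'a) = 2 * 2" by simp
    then have "(4::'a) \<noteq> 0" using two by (metis mult_eq_0_iff)
    then show ?thesis using I_square by (simp add: power2_eq_square field_simps)
  qed
  ultimately have "s = mbr ((-1) \<cdot>\<^sub>m ?A) (mbr ?A s)"
    using double_bracket_recovers[OF spin_carrier spin_carrier spin_square] j by blast
  moreover have "?A \<in> lie_gen F (2 ^ (n - r)) S" "s \<in> lie_gen F (2 ^ (n - r)) S"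
    using i j unfolding S_def by (auto intro: lie_gen.base)
  ultimately show "\<exists>x\<in>lie_gen F (2 ^ (n - r)) S. \<exists>y\<in>lie_gen F (2 ^ (n - r)) S. s = mbr x y"
    using minus_one by (blast intro: lie_gen.smult lie_gen.bracket)
qed

context imaginary_extension
begin

definition purely_imaginary :: "'l \<Rightarrow> bool" where
  "purely_imaginary x \<longleftrightarrow> (\<exists>c\<in>F. x = c * I)"

lemma purely_imaginary_zero: "purely_imaginary 0"
  unfolding purely_imaginary_def using F_0 by (intro bexI[of _ 0]) auto

lemma purely_imaginary_half_I: "purely_imaginary (I / 2)"
  unfolding purely_imaginary_def using F_divide[OF F_1 F_add[OF F_1 F_1]]
  by (intro bexI[of _ "1 / 2"]) auto

lemma purely_imaginary_uminus: "purely_imaginary x \<Longrightarrow> purely_imaginary (- x)"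
  unfolding purely_imaginary_def using F_uminus by force

text \<open>The entries of a spin matrix are purely imaginary and symmetric, so it is skew-Hermitian.\<close>
lemma spin_entries:
  "a < 2 ^ k \<Longrightarrow> b < 2 ^ k \<Longrightarrow>
   spin adj I r k i $$ (a, b) = spin adj I r k i $$ (b, a) \<and> purely_imaginary (spin adj I r k i $$ (a, b))"
proof (induction k arbitrary: a b)
  case 0 then show ?case using purely_imaginary_half_I by simp
next
  case (Suc k) then show ?case
    by (auto simp: Let_def purely_imaginary_zero purely_imaginary_half_I purely_imaginary_uminus)
qed

lemma spin_skew_hermitian: "skew_hermitian (2 ^ k) (spin adj I r k i)"
  unfolding skew_hermitian_def
proof (intro conjI allI impI spin_carrier)
  fix a b :: nat assume ab: "a < 2 ^ k" "b < 2 ^ k"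
  obtain c where c: "c \<in> F" "spin adj I r k i $$ (a, b) = c * I"
    using spin_entries[OF ab] unfolding purely_imaginary_def by blast
  show "conj (spin adj I r k i $$ (a, b)) = - spin adj I r k i $$ (b, a)"
  proof -
    have "spin adj I r k i $$ (b, a) = c * I" using spin_entries[OF ab] c(2) by metis
    then show ?thesis using c conj_F_I by simp
  qed
qed

end

text \<open>Reductivity needs only that the generators are skew-Hermitian; semisimplicity additionally
  uses that adjacent generators anticommute.\<close>

theorem mainTheorem11:
  fixes F :: "'l::field set" and I :: 'l
    and adj :: "nat \<Rightarrow> nat \<Rightarrow> bool" and n r :: nat
  assumes F_subfield: "subfield_of F"
    and F_real: "formally_real F"
    and I_sq: "I ^ 2 = - 1"
    and L_gen: "\<forall>z::'l. \<exists>a\<in>F. \<exists>b\<in>F. z = a + b * I"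
    and adj_sym: "\<forall>i j. adj i j \<longrightarrow> adj j i"
    and adj_irrefl: "\<forall>i. \<not> adj i i"
    and r_le: "r \<le> n"
    and indep: "\<forall>i\<in>{1..r}. \<forall>j\<in>{1..r}. \<not> adj i j"
    and maximal: "\<forall>j\<in>{r<..n}. \<exists>i\<in>{1..r}. adj i j"
  shows "lie_reductive F (2 ^ (n - r))
           (lie_gen F (2 ^ (n - r)) ((\<lambda>i. spin adj I r (n - r) i) ` {1..n}))
       \<and> ((\<forall>i\<in>{1..n}. \<exists>j\<in>{1..n}. adj i j) \<longrightarrow>
           lie_semisimple F (2 ^ (n - r))
             (lie_gen F (2 ^ (n - r)) ((\<lambda>i. spin adj I r (n - r) i) ` {1..n})))"
proof -
  interpret imaginary_extension F I
    using F_subfield F_real I_sq L_gen by unfold_locales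
  interpret skew_hermitian_generated F I "2 ^ (n - r)" "(\<lambda>i. spin adj I r (n - r) i) ` {1..n}"
    using spin_skew_hermitian by unfold_locales blast
  show ?thesis
    using reductive semisimple
      spin_generators_are_brackets[OF adj_sym adj_irrefl indep r_le I_sq two_nonzero F_uminus[OF F_1]]
    by blast
qed

end
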